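(* Consider the setting and algorithm described in the context, and assume: (A1) bounded delay: there is an integer $\tau\ge0$ such that for every $i\in[m]$ and $t\ge0$, $i\in\mathcal{A}_t\cup\cdots\cup\mathcal{A}_{\max\{t-\tau,0\}}$; (A2) each $\mathcal{L}_j$ is differentiable with $\|\nabla\mathcal{L}_j(x)-\nabla\mathcal{L}_j(y)\|\le L\|x-y\|$; (A3) each $\mathcal{L}_j$ is strongly convex with modulus $\sigma^2>0$: $\mathcal{L}_j(x)\ge\mathcal{L}_j(y)+\langle\nabla\mathcal{L}_j(y),x-y\rangle+\frac{\sigma^2}{2}\|x-y\|^2$ for all $x,y$. Let $\delta_1>0$ satisfy $\delta_1>(2L+\rho+1)/\sigma^2$. Then for every $t\ge0$, $\frac{1}{\frac{\rho}{2}(1+\delta_1)+\delta_1}\big(F(x^{t+1},x^t)-F(x^*,x^* )\big)\le\frac{\delta_1L+\frac{\rho}{2}(1+\delta_1)}{\frac{\rho}{2}(1+\delta_1)+\delta_1}\|x^t-x^{t+1}\|^2+\frac{1}{\frac{\rho}{2}(1+\delta_1)+\delta_1}\cdot\frac{\delta_1}{2m}L^2\sum_{j\in[m]}\|x^{t_j}-x^t\|^2.$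
   Context: Problem setting: integers $m\ge 2$, $n\ge1$, $p\ge1$. For $j\in[m]$, $i\in[n]$, $l_{ji}:\mathbb{R}^p\to\mathbb{R}$ are smooth loss functions; $h:\mathbb{R}^p\to\mathbb{R}\cup\{+\infty\}$ is proper, lower semicontinuous and convex. $\mathcal{L}_j(x)=\frac1n\sum_{i}l_{ji}(x)$, $\mathcal{L}(x)=\frac1m\sum_j\mathcal{L}_j(x)+h(x)$, and $x^*$ is the minimizer of $\mathcal{L}$. Machine 1 is the master. Algorithm EDANNI: given $x^0$ and $\rho\ge0$, at each iteration $t=0,1,\dots$ there is a set $\mathcal{A}_t\subseteq[m]$ of machines whose gradients arrive at iteration $t$, with $\mathcal{A}_0=[m]$; $t_j$ is the latest iteration $s\le t$ with $j\in\mathcal{A}_s$ (with $t_1=t$). The master updates $x^{t+1}=\arg\min_{x}\ \mathcal{L}_1(x)+h(x)+\frac{\rho}{2}\|x-x^t\|^2+\Big\langle \frac1m\sum_{j\in[m]}\nabla\mathcal{L}_j(x^{t_j})-\nabla\mathcal{L}_1(x^{t_1}),\,x-x^t\Big\rangle.$ Define $F(x,y)=\frac1m\sum_{j\in[m]}\mathcal{L}_j(x)+\frac{\rho}{2}\|x-y\|^2+h(x)$, so $F(x^*,x^* )=\mathcal{L}(x^* )$. *)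

theory Defs
  imports "HOL-Analysis.Analysis"
begin

text \<open>Extended-real-valued functions h : R^p -> R \<union> {+\<infinity>} are modelled as
  functions into ereal that never take the value -\<infinity>.\<close>

definition proper_ext :: "('a \<Rightarrow> ereal) \<Rightarrow> bool" where
  "proper_ext h \<longleftrightarrow> (\<forall>x. h x \<noteq> -\<infinity>) \<and> (\<exists>x. h x \<noteq> \<infinity>)"

definition lsc_ext :: "('a::topological_space \<Rightarrow> ereal) \<Rightarrow> bool" where
  "lsc_ext h \<longleftrightarrow> (\<forall>c. closed {x. h x \<le> c})"

definition convex_ext :: "('a::real_vector \<Rightarrow> ereal) \<Rightarrow> bool" where
  "convex_ext h \<longleftrightarrow> (\<forall>x y u. 0 \<le> u \<and> u \<le> 1 \<longrightarrow>
      h ((1 - u) *\<^sub>R x + u *\<^sub>R y) \<le> ereal (1 - u) * h x + ereal u * h y)"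

definition Lloc :: "(nat \<Rightarrow> nat \<Rightarrow> 'a \<Rightarrow> real) \<Rightarrow> nat \<Rightarrow> nat \<Rightarrow> 'a \<Rightarrow> real" where
  "Lloc l n j x = (1 / real n) * (\<Sum>i\<in>{1..n}. l j i x)"

definition Lglob :: "(nat \<Rightarrow> nat \<Rightarrow> 'a \<Rightarrow> real) \<Rightarrow> ('a \<Rightarrow> ereal) \<Rightarrow> nat \<Rightarrow> nat \<Rightarrow> 'a \<Rightarrow> ereal" where
  "Lglob l h m n x = ereal ((1 / real m) * (\<Sum>j\<in>{1..m}. Lloc l n j x)) + h x"

definition Ffun :: "(nat \<Rightarrow> nat \<Rightarrow> 'a::real_normed_vector \<Rightarrow> real) \<Rightarrow> ('a \<Rightarrow> ereal) \<Rightarrow> nat \<Rightarrow> nat \<Rightarrow> real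
    \<Rightarrow> 'a \<Rightarrow> 'a \<Rightarrow> ereal" where
  "Ffun l h m n \<rho> x y = ereal ((1 / real m) * (\<Sum>j\<in>{1..m}. Lloc l n j x) + \<rho> / 2 * (norm (x - y))\<^sup>2) + h x"

text \<open>t_j: latest iteration s \<le> t with j \<in> A_s; by convention t_1 = t (machine 1 is the master).\<close>
definition tlast :: "(nat \<Rightarrow> nat set) \<Rightarrow> nat \<Rightarrow> nat \<Rightarrow> nat" where
  "tlast A t j = (if j = 1 then t else (GREATEST s. s \<le> t \<and> j \<in> A s))"

definition master_obj :: "(nat \<Rightarrow> nat \<Rightarrow> 'a::real_inner \<Rightarrow> real) \<Rightarrow> ('a \<Rightarrow> ereal) \<Rightarrow> nat \<Rightarrow> nat \<Rightarrow> real
    \<Rightarrow> (nat \<Rightarrow> 'a \<Rightarrow> 'a) \<Rightarrow> (nat \<Rightarrow> nat set) \<Rightarrow> (nat \<Rightarrow> 'a) \<Rightarrow> nat \<Rightarrow> 'a \<Rightarrow> ereal" where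
  "master_obj l h m n \<rho> G A xs t x =
     ereal (Lloc l n 1 x) + h x +
     ereal (\<rho> / 2 * (norm (x - xs t))\<^sup>2 +
       ((1 / real m) *\<^sub>R (\<Sum>j\<in>{1..m}. G j (xs (tlast A t j))) - G 1 (xs (tlast A t 1))) \<bullet> (x - xs t))"

end

theory Submission
  imports Defs
begin

text \<open>The master step x = x(t+1) minimises L_1 + h plus a proximal term and a linear
  correction. Comparing x with the points of the segment towards x* and using convexity of h
  and the descent inequality for L_1 gives the variational inequality
  h(x*) - h(x) \<ge> -<d, x* - x> for the master's search direction d. Adding strong convexity of
  the mean loss bounds the gap F(x, x(t)) - F(x*, x*) by
  <V, x - x*> - \<sigma>^2/2 |x - x*|^2 + \<rho>/2 |x - x(t)|^2, where V is the difference between the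
  mean gradient at x and d. By the Lipschitz bound |V| is at most
  (2L + \<rho>) |x - x(t)| + L/m \<Sum>_j |x(t_j) - x(t)|; Young's inequality eliminates x*, and
  Cauchy-Schwarz together with \<delta>_1 \<ge> (2L + \<rho> + 1)/\<sigma>^2 yields the stated bound.\<close>

lemma nonneg_if_nonneg_add_small_multiple:
  fixes P K :: real
  assumes "\<And>u. 0 < u \<Longrightarrow> u \<le> 1 \<Longrightarrow> 0 \<le> P + u * K"
  shows "0 \<le> P"
proof (rule ccontr)
  assume P: "\<not> 0 \<le> P"
  show False
  proof (cases "K \<le> 0")
    case True
    with assms[of 1] P show False by simp
  next
    case False
    define u where "u = min 1 (- P / (2 * K))"
    have u: "0 < u" "u \<le> 1" using P False by (simp_all add: u_def divide_neg_pos)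
    have "u * K \<le> (- P / (2 * K)) * K"
      using False by (intro mult_right_mono) (auto simp: u_def)
    also have "\<dots> = - P / 2" using False by simp
    finally have "P + u * K < 0" using P by simp
    with assms[OF u] show False by simp
  qed
qed

lemma lipschitz_constant_nonneg:
  fixes f :: "'a::euclidean_space \<Rightarrow> 'b::real_normed_vector"
  assumes "\<And>x y. norm (f x - f y) \<le> L * norm (x - y)"
  shows "0 \<le> L"
proof -
  obtain b :: 'a where "b \<in> Basis" using nonempty_Basis by blast
  with nonzero_Basis have "0 < norm (b - 0)" by auto
  moreover have "0 \<le> L * norm (b - 0)" using assms[of b 0] norm_ge_zero order_trans by blast
  ultimately show ?thesis by (simp add: zero_le_mult_iff)
qed

lemma gradient_lipschitz_upper_bound:
  fixes f :: "'a::real_inner \<Rightarrow> real"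
  assumes convex: "f z + G z \<bullet> (x - z) \<le> f x"
    and lipschitz: "norm (G z - G x) \<le> L * norm (z - x)"
  shows "f z \<le> f x + G x \<bullet> (z - x) + L * (norm (z - x))\<^sup>2"
proof -
  have "(G z - G x) \<bullet> (z - x) \<le> norm (G z - G x) * norm (z - x)"
    by (rule norm_cauchy_schwarz)
  also have "\<dots> \<le> L * (norm (z - x))\<^sup>2"
    using mult_right_mono[OF lipschitz norm_ge_zero[of "z - x"]] by (simp add: power2_eq_square)
  finally show ?thesis
    using convex by (simp add: inner_diff_left inner_diff_right algebra_simps)
qed

lemma proximal_model_upper_bound:
  fixes x y z g D :: "'a::real_inner"
  assumes "f z \<le> f x + D \<bullet> (z - x) + L * (norm (z - x))\<^sup>2"
  shows "f z + \<rho> / 2 * (norm (z - y))\<^sup>2 + g \<bullet> (z - y)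
    \<le> f x + \<rho> / 2 * (norm (x - y))\<^sup>2 + g \<bullet> (x - y)
       + (D + \<rho> *\<^sub>R (x - y) + g) \<bullet> (z - x) + (L + \<rho> / 2) * (norm (z - x))\<^sup>2"
proof -
  have "(norm (z - y))\<^sup>2 = (norm (x - y))\<^sup>2 + 2 * ((x - y) \<bullet> (z - x)) + (norm (z - x))\<^sup>2"
    using dot_norm[of "x - y" "z - x"] by simp
  moreover have "g \<bullet> (z - y) = g \<bullet> (x - y) + g \<bullet> (z - x)" by (simp add: inner_diff_right)
  moreover have "(D + \<rho> *\<^sub>R (x - y) + g) \<bullet> (z - x) = D \<bullet> (z - x) + \<rho> * ((x - y) \<bullet> (z - x)) + g \<bullet> (z - x)"
    by (simp add: inner_add_left)
  ultimately show ?thesis using assms by (simp add: ring_distribs)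
qed

lemma ereal_minimizer_finite:
  assumes "proper_ext h" and "\<And>z. ereal (q x) + h x \<le> ereal (q z) + h z"
  shows "h x \<noteq> \<infinity>"
proof
  assume "h x = \<infinity>"
  obtain z where "h z \<noteq> \<infinity>" "h z \<noteq> -\<infinity>" using assms(1) by (auto simp: proper_ext_def)
  with assms(2)[of z] \<open>h x = \<infinity>\<close> show False by auto
qed

lemma convex_composite_min_variational_ineq:
  fixes q :: "'a::real_inner \<Rightarrow> real" and h :: "'a \<Rightarrow> ereal"
  assumes h_convex: "convex_ext h" and h_finite: "\<And>z. h z \<noteq> -\<infinity>" "h x \<noteq> \<infinity>" "h y \<noteq> \<infinity>"
    and min: "\<And>z. ereal (q x) + h x \<le> ereal (q z) + h z"
    and upper: "\<And>z. q z \<le> q x + D \<bullet> (z - x) + C * (norm (z - x))\<^sup>2"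
  shows "0 \<le> D \<bullet> (y - x) + real_of_ereal (h y) - real_of_ereal (h x)"
proof -
  obtain a b where a: "h x = ereal a" and b: "h y = ereal b"
    using h_finite by (cases "h x"; cases "h y") auto
  have "0 \<le> D \<bullet> (y - x) + b - a"
  proof (rule nonneg_if_nonneg_add_small_multiple[where K = "C * (norm (y - x))\<^sup>2"])
    fix u :: real assume u: "0 < u" "u \<le> 1"
    define z where "z = (1 - u) *\<^sub>R x + u *\<^sub>R y"
    have zx: "z - x = u *\<^sub>R (y - x)" by (simp add: z_def algebra_simps)
    have "h z \<le> ereal (1 - u) * h x + ereal u * h y"
      using h_convex u unfolding convex_ext_def z_def by (simp only: less_imp_le)
    also have "\<dots> = ereal ((1 - u) * a + u * b)" by (simp add: a b)
    finally have "h z \<le> ereal ((1 - u) * a + u * b)" .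
    then obtain c where c: "h z = ereal c" "c \<le> (1 - u) * a + u * b"
      using h_finite(1)[of z] by (cases "h z") auto
    have "D \<bullet> (z - x) = u * (D \<bullet> (y - x))" by (simp add: zx)
    moreover have "C * (norm (z - x))\<^sup>2 = u\<^sup>2 * (C * (norm (y - x))\<^sup>2)"
      using u by (simp add: zx power_mult_distrib)
    moreover have "q x + a \<le> q z + c" using min[of z] a c by simp
    moreover have "u * (D \<bullet> (y - x) + b - a + u * (C * (norm (y - x))\<^sup>2))
        = u * (D \<bullet> (y - x)) + u\<^sup>2 * (C * (norm (y - x))\<^sup>2) + ((1 - u) * a + u * b) - a"
      by (simp add: power2_eq_square algebra_simps)
    ultimately have "0 \<le> u * (D \<bullet> (y - x) + b - a + u * (C * (norm (y - x))\<^sup>2))"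
      using upper[of z] c(2) by linarith
    with u show "0 \<le> D \<bullet> (y - x) + b - a + u * (C * (norm (y - x))\<^sup>2)"
      by (simp add: zero_le_mult_iff)
  qed
  with a b show ?thesis by simp
qed

lemma proximal_step_variational_ineq:
  fixes f :: "'a::real_inner \<Rightarrow> real" and h :: "'a \<Rightarrow> ereal"
  assumes convex: "\<And>u v. f u + G u \<bullet> (v - u) \<le> f v"
    and lip: "\<And>u v. norm (G u - G v) \<le> L * norm (u - v)"
    and h_convex: "convex_ext h" and h_finite: "\<And>z. h z \<noteq> -\<infinity>" "h x \<noteq> \<infinity>" "h x' \<noteq> \<infinity>"
    and min: "\<And>z. ereal (f x + \<rho> / 2 * (norm (x - y))\<^sup>2 + g \<bullet> (x - y)) + h x
                  \<le> ereal (f z + \<rho> / 2 * (norm (z - y))\<^sup>2 + g \<bullet> (z - y)) + h z"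
  shows "0 \<le> (G x + \<rho> *\<^sub>R (x - y) + g) \<bullet> (x' - x) + real_of_ereal (h x') - real_of_ereal (h x)"
proof (rule convex_composite_min_variational_ineq[OF h_convex h_finite min])
  fix z
  have "f z \<le> f x + G x \<bullet> (z - x) + L * (norm (z - x))\<^sup>2"
    by (rule gradient_lipschitz_upper_bound[OF convex lip])
  then show "f z + \<rho> / 2 * (norm (z - y))\<^sup>2 + g \<bullet> (z - y)
      \<le> f x + \<rho> / 2 * (norm (x - y))\<^sup>2 + g \<bullet> (x - y)
        + (G x + \<rho> *\<^sub>R (x - y) + g) \<bullet> (z - x) + (L + \<rho> / 2) * (norm (z - x))\<^sup>2"
    by (rule proximal_model_upper_bound)
qed

lemma mean_strong_convexity:
  fixes f :: "'i \<Rightarrow> 'a::real_inner \<Rightarrow> real" and G :: "'i \<Rightarrow> 'a \<Rightarrow> 'a"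
  assumes I: "finite I" "I \<noteq> {}"
    and strong: "\<And>j. j \<in> I \<Longrightarrow> f j x + G j x \<bullet> (y - x) + s / 2 * (norm (y - x))\<^sup>2 \<le> f j y"
  shows "(1 / card I) * (\<Sum>j\<in>I. f j x) + ((1 / card I) *\<^sub>R (\<Sum>j\<in>I. G j x)) \<bullet> (y - x)
           + s / 2 * (norm (y - x))\<^sup>2 \<le> (1 / card I) * (\<Sum>j\<in>I. f j y)"
proof -
  have N: "real (card I) > 0" using I by (simp add: card_gt_0_iff)
  have "(\<Sum>j\<in>I. f j x) + (\<Sum>j\<in>I. G j x) \<bullet> (y - x) + card I * (s / 2 * (norm (y - x))\<^sup>2)
      = (\<Sum>j\<in>I. f j x + G j x \<bullet> (y - x) + s / 2 * (norm (y - x))\<^sup>2)"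
    by (simp add: sum.distrib inner_sum_left)
  also have "\<dots> \<le> (\<Sum>j\<in>I. f j y)" by (rule sum_mono) (rule strong)
  finally have "(1 / card I) * ((\<Sum>j\<in>I. f j x) + (\<Sum>j\<in>I. G j x) \<bullet> (y - x) + card I * (s / 2 * (norm (y - x))\<^sup>2))
      \<le> (1 / card I) * (\<Sum>j\<in>I. f j y)"
    using N by (intro mult_left_mono) auto
  then show ?thesis using N by (simp add: distrib_left)
qed

lemma norm_mean_gradient_error:
  fixes G :: "'i \<Rightarrow> 'a::real_normed_vector \<Rightarrow> 'b::real_normed_vector"
  assumes L: "0 \<le> L" and lip: "\<And>j u v. j \<in> I \<Longrightarrow> norm (G j u - G j v) \<le> L * norm (u - v)"
  shows "norm ((1 / card I) *\<^sub>R (\<Sum>j\<in>I. G j x - G j (w j)))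
           \<le> L * norm (x - y) + L / card I * (\<Sum>j\<in>I. norm (w j - y))"
proof (cases "finite I \<and> I \<noteq> {}")
  case True
  have N: "real (card I) > 0" using True by (simp add: card_gt_0_iff)
  have "norm (\<Sum>j\<in>I. G j x - G j (w j)) \<le> (\<Sum>j\<in>I. L * (norm (x - y) + norm (w j - y)))"
  proof (rule order_trans[OF norm_sum sum_mono])
    fix j assume j: "j \<in> I"
    have "norm (x - w j) \<le> norm (x - y) + norm (w j - y)"
      using norm_triangle_ineq4[of "x - y" "w j - y"] by simp
    with lip[OF j] L show "norm (G j x - G j (w j)) \<le> L * (norm (x - y) + norm (w j - y))"
      by (meson mult_left_mono order_trans)
  qed
  also have "\<dots> = card I * (L * norm (x - y)) + L * (\<Sum>j\<in>I. norm (w j - y))"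
    by (simp add: distrib_left sum.distrib sum_distrib_left)
  finally show ?thesis using N by (simp add: field_simps)
qed (use L in auto)

lemma young_quadratic:
  fixes a b s :: real
  assumes "0 < s"
  shows "a * b - s / 2 * b\<^sup>2 \<le> a\<^sup>2 / (2 * s)"
proof -
  have "a * b - s / 2 * b\<^sup>2 = (a\<^sup>2 - (a - s * b)\<^sup>2) / (2 * s)"
    using assms by (simp add: field_simps power2_eq_square)
  also have "\<dots> \<le> a\<^sup>2 / (2 * s)" using assms by (intro divide_right_mono) auto
  finally show ?thesis .
qed

lemma square_add_le_weighted:
  fixes P R Q :: real
  assumes "0 \<le> P"
  shows "(P * R + Q)\<^sup>2 \<le> (P + 1) * (P * R\<^sup>2 + Q\<^sup>2)"
proof -
  have "0 \<le> P * (R - Q)\<^sup>2" using assms by simp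
  then show ?thesis by (simp add: power2_eq_square algebra_simps)
qed

lemma gap_bound_algebra:
  fixes s v e P R Q L N S \<delta> \<rho> \<Phi> :: real
  assumes s: "0 < s" and \<Phi>: "\<Phi> \<le> v * e - s / 2 * e\<^sup>2 + \<rho> / 2 * R\<^sup>2"
    and v: "0 \<le> v" "v \<le> P * R + Q" and P: "P = 2 * L + \<rho>" "0 \<le> P"
    and nonneg: "0 \<le> R" "0 \<le> Q" and Q: "Q\<^sup>2 \<le> L\<^sup>2 / N * S"
    and \<delta>: "(P + 1) / s \<le> \<delta>"
  shows "\<Phi> \<le> (\<delta> * L + \<rho> / 2 * (1 + \<delta>)) * R\<^sup>2 + \<delta> / (2 * N) * L\<^sup>2 * S"
proof -
  have "v\<^sup>2 / (2 * s) \<le> (P * R + Q)\<^sup>2 / (2 * s)"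
    using v s by (intro divide_right_mono power_mono) auto
  also have "\<dots> \<le> (P + 1) * (P * R\<^sup>2 + Q\<^sup>2) / (2 * s)"
    using square_add_le_weighted[OF P(2)] s by (intro divide_right_mono) auto
  also have "\<dots> = (P + 1) / s * (P * R\<^sup>2 + Q\<^sup>2) / 2" by simp
  also have "\<dots> \<le> \<delta> * (P * R\<^sup>2 + L\<^sup>2 / N * S) / 2"
  proof -
    have "0 \<le> (P + 1) / s" "0 \<le> P * R\<^sup>2 + Q\<^sup>2" using P s by simp_all
    with \<delta> Q have "(P + 1) / s * (P * R\<^sup>2 + Q\<^sup>2) \<le> \<delta> * (P * R\<^sup>2 + L\<^sup>2 / N * S)"
      by (intro mult_mono) auto
    then show ?thesis by simp
  qed
  finally have "\<Phi> \<le> \<delta> * (P * R\<^sup>2 + L\<^sup>2 / N * S) / 2 + \<rho> / 2 * R\<^sup>2"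
    using \<Phi> young_quadratic[OF s, of v e] by linarith
  also have "\<dots> = (\<delta> * L + \<rho> / 2 * (1 + \<delta>)) * R\<^sup>2 + \<delta> / (2 * N) * L\<^sup>2 * S"
    by (simp add: P(1) field_simps)
  finally show ?thesis .
qed

lemma objective_gap_bound:
  fixes f :: "'i \<Rightarrow> 'a::real_inner \<Rightarrow> real" and G :: "'i \<Rightarrow> 'a \<Rightarrow> 'a"
    and hr :: "'a \<Rightarrow> real" and w :: "'i \<Rightarrow> 'a"
  assumes I: "finite I" "i \<in> I"
    and strong: "\<And>j u v. j \<in> I \<Longrightarrow> f j u + G j u \<bullet> (v - u) + s / 2 * (norm (v - u))\<^sup>2 \<le> f j v"
    and lip: "\<And>j u v. j \<in> I \<Longrightarrow> norm (G j u - G j v) \<le> L * norm (u - v)"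
    and opt: "0 \<le> (G i x + \<rho> *\<^sub>R (x - y) + ((1 / card I) *\<^sub>R (\<Sum>j\<in>I. G j (w j)) - G i y)) \<bullet> (x' - x)
                + hr x' - hr x"
    and s: "0 < s" and \<rho>: "0 \<le> \<rho>" and L: "0 \<le> L" and \<delta>: "(2 * L + \<rho> + 1) / s \<le> \<delta>"
  shows "(1 / card I) * (\<Sum>j\<in>I. f j x) + \<rho> / 2 * (norm (x - y))\<^sup>2 + hr x
           - ((1 / card I) * (\<Sum>j\<in>I. f j x') + hr x')
         \<le> (\<delta> * L + \<rho> / 2 * (1 + \<delta>)) * (norm (x - y))\<^sup>2
           + \<delta> / (2 * real (card I)) * L\<^sup>2 * (\<Sum>j\<in>I. (norm (w j - y))\<^sup>2)"
proof -
  define N where "N = real (card I)"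
  define R where "R = norm (x - y)"
  define Q where "Q = L / N * (\<Sum>j\<in>I. norm (w j - y))"
  define D where "D = G i x + \<rho> *\<^sub>R (x - y) + ((1 / N) *\<^sub>R (\<Sum>j\<in>I. G j (w j)) - G i y)"
  define V where "V = (1 / N) *\<^sub>R (\<Sum>j\<in>I. G j x - G j (w j)) - (G i x - G i y) - \<rho> *\<^sub>R (x - y)"
  have N: "N > 0" using I by (auto simp: N_def card_gt_0_iff)
  have mean: "(1 / N) * (\<Sum>j\<in>I. f j x) + ((1 / N) *\<^sub>R (\<Sum>j\<in>I. G j x)) \<bullet> (x' - x)
      + s / 2 * (norm (x' - x))\<^sup>2 \<le> (1 / N) * (\<Sum>j\<in>I. f j x')"
    unfolding N_def using I by (intro mean_strong_convexity strong) auto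
  have "V = (1 / N) *\<^sub>R (\<Sum>j\<in>I. G j x) - D"
    unfolding V_def D_def by (simp add: sum_subtractf scaleR_diff_right algebra_simps)
  then have "V \<bullet> (x - x') = D \<bullet> (x' - x) - ((1 / N) *\<^sub>R (\<Sum>j\<in>I. G j x)) \<bullet> (x' - x)"
    by (metis inner_diff_left inner_minus_right minus_diff_eq)
  moreover have "0 \<le> D \<bullet> (x' - x) + hr x' - hr x" using opt by (simp add: D_def N_def)
  ultimately have "(1 / N) * (\<Sum>j\<in>I. f j x) + \<rho> / 2 * R\<^sup>2 + hr x - ((1 / N) * (\<Sum>j\<in>I. f j x') + hr x')
      \<le> V \<bullet> (x - x') - s / 2 * (norm (x - x'))\<^sup>2 + \<rho> / 2 * R\<^sup>2"
    using mean norm_minus_commute[of x' x] unfolding R_def by (smt (verit))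
  also have "\<dots> \<le> norm V * norm (x - x') - s / 2 * (norm (x - x'))\<^sup>2 + \<rho> / 2 * R\<^sup>2"
    using norm_cauchy_schwarz[of V "x - x'"] by linarith
  also have "\<dots> \<le> (\<delta> * L + \<rho> / 2 * (1 + \<delta>)) * R\<^sup>2 + \<delta> / (2 * N) * L\<^sup>2 * (\<Sum>j\<in>I. (norm (w j - y))\<^sup>2)"
  proof -
    have "norm ((1 / N) *\<^sub>R (\<Sum>j\<in>I. G j x - G j (w j))) \<le> L * R + Q"
      unfolding N_def R_def Q_def by (rule norm_mean_gradient_error[OF L lip])
    moreover have "norm (G i x - G i y) \<le> L * R" unfolding R_def by (rule lip[OF I(2)])
    moreover have "norm (\<rho> *\<^sub>R (x - y)) = \<rho> * R" using \<rho> by (simp add: R_def)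
    ultimately have "norm V \<le> (L * R + Q) + L * R + \<rho> * R"
      unfolding V_def by (smt (verit) norm_triangle_ineq4)
    then have V: "norm V \<le> (2 * L + \<rho>) * R + Q" by (simp add: algebra_simps)
    have "Q\<^sup>2 = (L / N)\<^sup>2 * (\<Sum>j\<in>I. norm (w j - y))\<^sup>2" unfolding Q_def by (simp add: power_mult_distrib power_divide)
    also have "\<dots> \<le> (L / N)\<^sup>2 * ((\<Sum>j\<in>I. (norm (w j - y))\<^sup>2) * N)"
      unfolding N_def by (intro mult_left_mono sum_squared_le_sum_of_squares) auto
    also have "\<dots> = L\<^sup>2 / N * (\<Sum>j\<in>I. (norm (w j - y))\<^sup>2)" using N by (simp add: power2_eq_square)
    finally have Q: "Q\<^sup>2 \<le> L\<^sup>2 / N * (\<Sum>j\<in>I. (norm (w j - y))\<^sup>2)" .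
    have "0 \<le> 2 * L + \<rho>" "0 \<le> R" "0 \<le> Q" using L \<rho> N by (auto simp: R_def Q_def sum_nonneg)
    then show ?thesis by (rule gap_bound_algebra[OF s order_refl norm_ge_zero V refl _ _ _ Q \<delta>])
  qed
  finally show ?thesis by (simp only: N_def R_def)
qed

lemma Ffun_finite:
  assumes "h x \<noteq> \<infinity>" and "h x \<noteq> -\<infinity>"
  shows "Ffun l h m n \<rho> x y
    = ereal ((1 / real m) * (\<Sum>j\<in>{1..m}. Lloc l n j x) + \<rho> / 2 * (norm (x - y))\<^sup>2 + real_of_ereal (h x))"
  using assms by (cases "h x") (simp_all add: Ffun_def)

lemma ereal_scaled_diff_le:
  assumes "0 < c" and "P - Q \<le> a * r + b * u"
  shows "ereal (1 / c) * (ereal P - ereal Q) \<le> ereal (a / c * r + 1 / c * b * u)"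
proof -
  have "1 / c * (P - Q) \<le> 1 / c * (a * r + b * u)"
    using assms by (intro mult_left_mono) auto
  also have "\<dots> = a / c * r + 1 / c * b * u" by (simp add: ring_distribs)
  finally show ?thesis by simp
qed

theorem lemma4:
  fixes m n :: nat and l :: "nat \<Rightarrow> nat \<Rightarrow> 'a::euclidean_space \<Rightarrow> real"
    and h :: "'a \<Rightarrow> ereal" and G :: "nat \<Rightarrow> 'a \<Rightarrow> 'a"
    and xstar :: 'a and xs :: "nat \<Rightarrow> 'a" and A :: "nat \<Rightarrow> nat set"
    and \<rho> L \<sigma> \<delta>\<^sub>1 :: real and \<tau> :: nat
  assumes m: "m \<ge> 2" and n: "n \<ge> 1"
    and l_diff: "\<And>j i x. j \<in> {1..m} \<Longrightarrow> i \<in> {1..n} \<Longrightarrow> l j i differentiable (at x)"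
    and h_proper: "proper_ext h" and h_lsc: "lsc_ext h" and h_convex: "convex_ext h"
    and xstar_min: "\<And>x. Lglob l h m n xstar \<le> Lglob l h m n x"
    and rho: "\<rho> \<ge> 0"
    and A_sub: "\<And>t. A t \<subseteq> {1..m}" and A0: "A 0 = {1..m}"
    and update: "\<And>t y. master_obj l h m n \<rho> G A xs t (xs (Suc t)) \<le> master_obj l h m n \<rho> G A xs t y"
    and A1: "\<And>i t. i \<in> {1..m} \<Longrightarrow> \<exists>s\<in>{t - \<tau>..t}. i \<in> A s"
    and grad: "\<And>j x. j \<in> {1..m} \<Longrightarrow> (Lloc l n j has_derivative (\<lambda>v. G j x \<bullet> v)) (at x)"
    and A2: "\<And>j x y. j \<in> {1..m} \<Longrightarrow> norm (G j x - G j y) \<le> L * norm (x - y)"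
    and sigma: "\<sigma>\<^sup>2 > 0"
    and A3: "\<And>j x y. j \<in> {1..m} \<Longrightarrow>
               Lloc l n j x \<ge> Lloc l n j y + G j y \<bullet> (x - y) + \<sigma>\<^sup>2 / 2 * (norm (x - y))\<^sup>2"
    and delta_pos: "\<delta>\<^sub>1 > 0" and delta_big: "\<delta>\<^sub>1 > (2 * L + \<rho> + 1) / \<sigma>\<^sup>2"
  shows "ereal (1 / (\<rho> / 2 * (1 + \<delta>\<^sub>1) + \<delta>\<^sub>1)) *
           (Ffun l h m n \<rho> (xs (Suc t)) (xs t) - Ffun l h m n \<rho> xstar xstar)
         \<le> ereal ((\<delta>\<^sub>1 * L + \<rho> / 2 * (1 + \<delta>\<^sub>1)) / (\<rho> / 2 * (1 + \<delta>\<^sub>1) + \<delta>\<^sub>1) * (norm (xs t - xs (Suc t)))\<^sup>2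
             + 1 / (\<rho> / 2 * (1 + \<delta>\<^sub>1) + \<delta>\<^sub>1) * (\<delta>\<^sub>1 / (2 * real m)) * L\<^sup>2
                 * (\<Sum>j\<in>{1..m}. (norm (xs (tlast A t j) - xs t))\<^sup>2))"
proof -
  define x y where "x = xs (Suc t)" and "y = xs t"
  define g where "g = (1 / real m) *\<^sub>R (\<Sum>j\<in>{1..m}. G j (xs (tlast A t j))) - G 1 y"
  define hr where "hr z = real_of_ereal (h z)" for z
  have one: "1 \<in> {1..m}" using m by simp
  have h_ninf: "\<And>z. h z \<noteq> -\<infinity>" using h_proper by (simp add: proper_ext_def)
  have L: "0 \<le> L" by (rule lipschitz_constant_nonneg[OF A2[OF one]])
  have x_min: "ereal (Lloc l n 1 x + \<rho> / 2 * (norm (x - y))\<^sup>2 + g \<bullet> (x - y)) + h x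
      \<le> ereal (Lloc l n 1 z + \<rho> / 2 * (norm (z - y))\<^sup>2 + g \<bullet> (z - y)) + h z" for z
    using update[of t z] by (simp add: master_obj_def g_def x_def y_def tlast_def ac_simps)
  have hx: "h x \<noteq> \<infinity>" by (rule ereal_minimizer_finite[OF h_proper x_min])
  have hxstar: "h xstar \<noteq> \<infinity>"
    by (rule ereal_minimizer_finite[OF h_proper, where q = "\<lambda>z. (1 / real m) * (\<Sum>j\<in>{1..m}. Lloc l n j z)"])
      (use xstar_min in \<open>simp add: Lglob_def\<close>)
  have convex: "Lloc l n 1 u + G 1 u \<bullet> (v - u) \<le> Lloc l n 1 v" for u v
  proof -
    have "0 \<le> \<sigma>\<^sup>2 / 2 * (norm (v - u))\<^sup>2" by simp
    with A3[OF one, of u v] show ?thesis by linarith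
  qed
  have "0 \<le> (G 1 x + \<rho> *\<^sub>R (x - y) + g) \<bullet> (xstar - x) + hr xstar - hr x"
    unfolding hr_def
    by (rule proximal_step_variational_ineq[OF convex A2[OF one] h_convex h_ninf hx hxstar x_min])
  then have gap: "(1 / real m) * (\<Sum>j\<in>{1..m}. Lloc l n j x) + \<rho> / 2 * (norm (x - y))\<^sup>2 + hr x
      - ((1 / real m) * (\<Sum>j\<in>{1..m}. Lloc l n j xstar) + hr xstar)
      \<le> (\<delta>\<^sub>1 * L + \<rho> / 2 * (1 + \<delta>\<^sub>1)) * (norm (x - y))\<^sup>2
        + \<delta>\<^sub>1 / (2 * real m) * L\<^sup>2 * (\<Sum>j\<in>{1..m}. (norm (xs (tlast A t j) - y))\<^sup>2)"
    (is "?P - ?Q \<le> ?a * ?R + ?b * ?S")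
    using objective_gap_bound[of "{1..m}" 1 "Lloc l n" G "\<sigma>\<^sup>2" L x \<rho> y "\<lambda>j. xs (tlast A t j)" xstar hr \<delta>\<^sub>1]
      one A3 A2 sigma rho L delta_big
    by (simp add: g_def less_imp_le)
  have c_pos: "0 < \<rho> / 2 * (1 + \<delta>\<^sub>1) + \<delta>\<^sub>1" (is "0 < ?c")
    using rho delta_pos by (simp add: add_nonneg_pos)
  have "ereal (1 / ?c) * (ereal ?P - ereal ?Q) \<le> ereal (?a / ?c * ?R + 1 / ?c * ?b * ?S)"
    by (rule ereal_scaled_diff_le[OF c_pos gap])
  then show ?thesis
    using Ffun_finite[where h = h and x = x, OF hx h_ninf] Ffun_finite[where h = h and x = xstar, OF hxstar h_ninf]
    by (simp add: hr_def x_def y_def norm_minus_commute mult.assoc)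
qed

end
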